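(* Let $A,B\in\mathbb{R}^{m\times n}$ and $b\in\mathbb{R}^m$ with $\operatorname{rank}(A) = m$ and $m<n$, and let $1\le p\le\infty$. If $A^\dagger b\geq 0$, $A^\dagger B\geq0$ and $\|A^\dagger B\|_p<1$, then the equation $Ax-B|x|=b$ has at least one nonnegative solution.
   Context: $A^\dagger$ is the Moore–Penrose inverse; $|x|$ is the entrywise absolute value; vector/matrix inequalities are entrywise; $\|\cdot\|_p$ on matrices is the operator norm induced by the vector $p$-norm. *)

theory Defs
  imports "HOL-Analysis.Analysis" "HOL-Library.Extended_Real"
begin

definition moore_penrose :: "real^'n^'m \<Rightarrow> real^'m^'n" where
  "moore_penrose A = (THE X. A ** X ** A = A \<and> X ** A ** X = X \<and>
      transpose (A ** X) = A ** X \<and> transpose (X ** A) = X ** A)"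

definition vabs :: "real^'n \<Rightarrow> real^'n" where
  "vabs x = (\<chi> i. \<bar>x $ i\<bar>)"

definition vnonneg :: "real^'n \<Rightarrow> bool" where
  "vnonneg x \<longleftrightarrow> (\<forall>i. x $ i \<ge> 0)"

definition mnonneg :: "real^'n^'m \<Rightarrow> bool" where
  "mnonneg M \<longleftrightarrow> (\<forall>i j. M $ i $ j \<ge> 0)"

definition vec_pnorm :: "ereal \<Rightarrow> real^'n \<Rightarrow> real" where
  "vec_pnorm p x = (if p = \<infinity> then Max (range (\<lambda>i. \<bar>x $ i\<bar>))
     else (\<Sum>i\<in>UNIV. \<bar>x $ i\<bar> powr real_of_ereal p) powr (1 / real_of_ereal p))"

definition mat_pnorm :: "ereal \<Rightarrow> real^'n^'m \<Rightarrow> real" where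
  "mat_pnorm p M = (SUP x\<in>{x :: real^'n. x \<noteq> 0}. vec_pnorm p (M *v x) / vec_pnorm p x)"

end

theory Submission
  imports Defs
begin

text \<open>
  Full row rank makes \<open>A A\<^sup>\<dagger> = I\<close>, so any \<open>x \<ge> 0\<close> with
  \<open>x = A\<^sup>\<dagger>b + A\<^sup>\<dagger>B x\<close> solves \<open>Ax - B|x| = b\<close>.
  For \<open>C = A\<^sup>\<dagger>B\<close> with \<open>\<parallel>C\<parallel>\<^sub>p < 1\<close>, no nonzero \<open>z\<close> has
  \<open>\<parallel>z\<parallel>\<^sub>p \<le> \<parallel>Cz\<parallel>\<^sub>p\<close>. This makes \<open>I - C\<close> injective, hence invertible, which
  gives the fixed point; and since \<open>C \<ge> 0\<close> and \<open>A\<^sup>\<dagger>b \<ge> 0\<close>, the negative part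
  \<open>y\<close> of the fixed point satisfies \<open>0 \<le> y \<le> Cy\<close>, so monotonicity of the
  \<open>p\<close>-norm forces \<open>y = 0\<close>.
\<close>

definition penrose_conditions :: "'a::comm_semiring_1^'n^'m \<Rightarrow> 'a^'m^'n \<Rightarrow> bool" where
  "penrose_conditions A X \<longleftrightarrow> A ** X ** A = A \<and> X ** A ** X = X \<and>
     transpose (A ** X) = A ** X \<and> transpose (X ** A) = X ** A"

lemma penrose_conditions_unique:
  assumes "penrose_conditions A X" and "penrose_conditions A Y"
  shows "X = Y"
proof -
  have x: "A ** X ** A = A" "X ** A ** X = X" "transpose (A ** X) = A ** X" "transpose (X ** A) = X ** A"
    and y: "A ** Y ** A = A" "Y ** A ** Y = Y" "transpose (A ** Y) = A ** Y" "transpose (Y ** A) = Y ** A"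
    using assms unfolding penrose_conditions_def by auto
  have "X = X ** transpose (A ** X)" using x(2,3) by (simp add: matrix_mul_assoc)
  also have "\<dots> = X ** transpose (A ** Y ** A ** X)" using y(1) by simp
  also have "\<dots> = X ** transpose (A ** X) ** transpose (A ** Y)"
    by (simp add: matrix_transpose_mul matrix_mul_assoc)
  also have "\<dots> = X ** A ** Y" using x(2,3) y(3) by (simp add: matrix_mul_assoc)
  finally have XAY: "X = X ** A ** Y" .
  have "Y = transpose (Y ** A) ** Y" using y(2,4) by simp
  also have "\<dots> = transpose ((Y ** A) ** (X ** A)) ** Y"
    using x(1) by (metis matrix_mul_assoc)
  also have "\<dots> = transpose (X ** A) ** transpose (Y ** A) ** Y"
    by (simp add: matrix_transpose_mul)
  also have "\<dots> = X ** A ** (Y ** A ** Y)" using x(4) y(4) by (simp add: matrix_mul_assoc)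
  also have "\<dots> = X ** A ** Y" using y(2) by simp
  finally show ?thesis using XAY by simp
qed

lemma moore_penrose_eqI:
  assumes "penrose_conditions A X"
  shows "moore_penrose A = X"
  unfolding moore_penrose_def penrose_conditions_def[symmetric]
  using assms penrose_conditions_unique by blast

lemma inverse_of_symmetric_matrix_symmetric:
  fixes M G :: "'a::field^'n^'n"
  assumes "transpose M = M" and "M ** G = mat 1"
  shows "transpose G = G"
proof -
  have "transpose G ** M = mat 1"
    using assms by (metis matrix_transpose_mul transpose_mat)
  then show ?thesis
    by (metis assms(2) matrix_mul_assoc matrix_mul_lid matrix_mul_rid)
qed

lemma invertible_mult_transpose_full_row_rank:
  fixes A :: "real^'n^'m"
  assumes "rank A = CARD('m)"
  shows "invertible (A ** transpose A)"
proof -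
  have inj: "inj ((*v) (transpose A))"
    using assms full_rank_injective[of "transpose A"] by (simp add: rank_transpose)
  have "u = 0" if "(A ** transpose A) *v u = 0" for u
  proof -
    have "(transpose A *v u) \<bullet> (transpose A *v u) = u \<bullet> ((A ** transpose A) *v u)"
      by (simp add: dot_lmul_matrix[symmetric] matrix_vector_mul_assoc[symmetric])
    then have "transpose A *v u = transpose A *v 0" using that by simp
    then show "u = 0" using inj by (meson injD)
  qed
  then show ?thesis
    by (simp add: invertible_left_inverse matrix_left_invertible_ker)
qed

lemma moore_penrose_right_inverse:
  fixes A :: "real^'n^'m"
  assumes "rank A = CARD('m)"
  shows "A ** moore_penrose A = mat 1"
proof -
  obtain G where G: "(A ** transpose A) ** G = mat 1"
    using invertible_mult_transpose_full_row_rank[OF assms] invertible_def by blast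
  have GT: "transpose G = G"
    by (rule inverse_of_symmetric_matrix_symmetric[OF _ G]) (simp add: matrix_transpose_mul)
  have AX: "A ** (transpose A ** G) = mat 1" using G by (simp add: matrix_mul_assoc)
  have "penrose_conditions A (transpose A ** G)"
    using AX unfolding penrose_conditions_def
    by (simp add: matrix_mul_assoc[symmetric] matrix_transpose_mul GT)
  then show ?thesis using AX moore_penrose_eqI by metis
qed

lemma ereal_pos_finite_cases:
  fixes p :: ereal
  assumes "0 < p" "p \<noteq> \<infinity>"
  obtains q where "p = ereal q" "0 < q"
  using assms by (cases p) auto

lemma abs_nth_le_vec_pnorm:
  fixes x :: "real^'n"
  assumes "0 < p"
  shows "\<bar>x $ i\<bar> \<le> vec_pnorm p x"
proof (cases "p = \<infinity>")
  case True
  then show ?thesis unfolding vec_pnorm_def by simp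
next
  case False
  then obtain q where q: "p = ereal q" "0 < q" using assms ereal_pos_finite_cases by blast
  have "\<bar>x $ i\<bar> = (\<bar>x $ i\<bar> powr q) powr (1/q)" using q by (simp add: powr_powr)
  also have "\<dots> \<le> (\<Sum>j\<in>UNIV. \<bar>x $ j\<bar> powr q) powr (1/q)"
    using q by (intro powr_mono2 member_le_sum) auto
  finally show ?thesis using False q unfolding vec_pnorm_def by simp
qed

lemma vec_pnorm_nonneg: "0 < p \<Longrightarrow> 0 \<le> vec_pnorm p x"
  using order_trans[OF abs_ge_zero abs_nth_le_vec_pnorm] by blast

lemma vec_pnorm_zero [simp]: "vec_pnorm p 0 = 0"
  unfolding vec_pnorm_def by simp

lemma vec_pnorm_eq_0_iff:
  assumes "0 < p"
  shows "vec_pnorm p x = 0 \<longleftrightarrow> x = 0"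
proof
  assume "vec_pnorm p x = 0"
  then show "x = 0" using abs_nth_le_vec_pnorm[OF assms, of x] by (simp add: vec_eq_iff)
qed simp

lemma vec_pnorm_mono:
  fixes x y :: "real^'n"
  assumes "0 < p" and "\<And>i. \<bar>x $ i\<bar> \<le> \<bar>y $ i\<bar>"
  shows "vec_pnorm p x \<le> vec_pnorm p y"
proof (cases "p = \<infinity>")
  case True
  have "\<bar>x $ i\<bar> \<le> Max (range (\<lambda>i. \<bar>y $ i\<bar>))" for i
    using assms(2)[of i] by (auto simp: Max_ge_iff)
  then show ?thesis using True unfolding vec_pnorm_def by simp
next
  case False
  then obtain q where q: "p = ereal q" "0 < q" using assms ereal_pos_finite_cases by blast
  have "(\<Sum>i\<in>UNIV. \<bar>x $ i\<bar> powr q) powr (1/q) \<le> (\<Sum>i\<in>UNIV. \<bar>y $ i\<bar> powr q) powr (1/q)"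
    using q assms(2) by (intro powr_mono2 sum_mono sum_nonneg) auto
  then show ?thesis using False q unfolding vec_pnorm_def by simp
qed

lemma vec_pnorm_scale:
  fixes x :: "real^'n"
  assumes "0 < p"
  shows "vec_pnorm p (c *s x) = \<bar>c\<bar> * vec_pnorm p x"
proof (cases "p = \<infinity>")
  case True
  have "Max (range (\<lambda>i. \<bar>c\<bar> * \<bar>x $ i\<bar>)) = \<bar>c\<bar> * Max (range (\<lambda>i. \<bar>x $ i\<bar>))"
    by (subst mono_Max_commute[of "\<lambda>t. \<bar>c\<bar> * t"])
       (auto simp: mono_def mult_left_mono image_image)
  then show ?thesis using True unfolding vec_pnorm_def by (simp add: abs_mult)
next
  case False
  then obtain q where q: "p = ereal q" "0 < q" using assms ereal_pos_finite_cases by blast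
  have "(\<Sum>i\<in>UNIV. \<bar>c * x $ i\<bar> powr q) powr (1/q)
      = (\<bar>c\<bar> powr q * (\<Sum>i\<in>UNIV. \<bar>x $ i\<bar> powr q)) powr (1/q)"
    by (simp add: abs_mult powr_mult sum_distrib_left)
  also have "\<dots> = \<bar>c\<bar> * (\<Sum>i\<in>UNIV. \<bar>x $ i\<bar> powr q) powr (1/q)"
    using q by (simp add: powr_mult powr_powr sum_nonneg)
  finally show ?thesis using False q unfolding vec_pnorm_def by simp
qed

lemma bdd_above_vec_pnorm_quotients:
  fixes M :: "real^'n^'m"
  assumes "0 < p"
  shows "bdd_above ((\<lambda>x. vec_pnorm p (M *v x) / vec_pnorm p x) ` {x. x \<noteq> 0})"
proof (rule bdd_aboveI2)
  define S where "S = (\<Sum>i\<in>UNIV. \<Sum>j\<in>UNIV. \<bar>M $ i $ j\<bar>)"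
  fix x :: "real^'n"
  assume "x \<in> {x. x \<noteq> 0}"
  then have pos: "0 < vec_pnorm p x"
    using assms vec_pnorm_eq_0_iff vec_pnorm_nonneg by (metis less_eq_real_def mem_Collect_eq)
  have S0: "0 \<le> S * vec_pnorm p x"
    unfolding S_def using pos by (intro mult_nonneg_nonneg sum_nonneg) auto
  have coordinatewise: "\<bar>(M *v x) $ i\<bar> \<le> \<bar>((S * vec_pnorm p x) *s 1) $ i\<bar>" for i
  proof -
    have "\<bar>(M *v x) $ i\<bar> \<le> (\<Sum>j\<in>UNIV. \<bar>M $ i $ j\<bar> * \<bar>x $ j\<bar>)"
      unfolding matrix_vector_mult_def by (simp add: abs_mult[symmetric] sum_abs)
    also have "\<dots> \<le> (\<Sum>j\<in>UNIV. \<bar>M $ i $ j\<bar>) * vec_pnorm p x"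
      unfolding sum_distrib_right
      by (intro sum_mono mult_left_mono abs_nth_le_vec_pnorm assms) auto
    also have "\<dots> \<le> S * vec_pnorm p x"
      unfolding S_def using pos
      by (intro mult_right_mono member_le_sum[where f = "\<lambda>i. \<Sum>j\<in>UNIV. \<bar>M $ i $ j\<bar>"])
         (auto intro: sum_nonneg)
    finally show ?thesis using S0 by simp
  qed
  have "vec_pnorm p (M *v x) \<le> vec_pnorm p ((S * vec_pnorm p x) *s (1 :: real^'m))"
    by (rule vec_pnorm_mono[OF assms coordinatewise])
  also have "\<dots> = S * vec_pnorm p (1 :: real^'m) * vec_pnorm p x"
    using S0 by (simp add: vec_pnorm_scale[OF assms] mult_ac)
  finally show "vec_pnorm p (M *v x) / vec_pnorm p x \<le> S * vec_pnorm p (1 :: real^'m)"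
    by (simp add: pos_divide_le_eq[OF pos])
qed

lemma vec_pnorm_matrix_vector_mult_le:
  fixes M :: "real^'n^'m"
  assumes "0 < p"
  shows "vec_pnorm p (M *v x) \<le> mat_pnorm p M * vec_pnorm p x"
proof (cases "x = 0")
  case True
  then show ?thesis by simp
next
  case False
  then have "vec_pnorm p (M *v x) / vec_pnorm p x \<le> mat_pnorm p M"
    unfolding mat_pnorm_def by (intro cSup_upper bdd_above_vec_pnorm_quotients assms) auto
  moreover have "0 < vec_pnorm p x"
    using False assms vec_pnorm_eq_0_iff vec_pnorm_nonneg by (metis less_eq_real_def)
  ultimately show ?thesis by (simp add: pos_divide_le_eq mult.commute)
qed

lemma eq_0_if_vec_pnorm_le_contraction:
  fixes C :: "real^'n^'m"
  assumes "0 < p" and "mat_pnorm p C < 1" and "vec_pnorm p z \<le> vec_pnorm p (C *v z)"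
  shows "z = 0"
proof -
  have "vec_pnorm p z \<le> mat_pnorm p C * vec_pnorm p z"
    using assms(3) vec_pnorm_matrix_vector_mult_le[OF assms(1)] by (rule order_trans)
  then have "vec_pnorm p z = 0"
    using assms(2) vec_pnorm_nonneg[OF assms(1), of z] by (auto simp: mult_le_cancel_right1)
  then show ?thesis using vec_pnorm_eq_0_iff[OF assms(1)] by blast
qed

lemma affine_contraction_has_fixpoint:
  fixes C :: "real^'n^'n"
  assumes "0 < p" and "mat_pnorm p C < 1"
  obtains x where "x = c + C *v x"
proof -
  have "z = 0" if "(mat 1 - C) *v z = 0" for z
    using that eq_0_if_vec_pnorm_le_contraction[OF assms, of z]
    by (simp add: matrix_vector_mult_diff_rdistrib)
  then obtain L where "L ** (mat 1 - C) = mat 1"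
    using matrix_left_invertible_ker by blast
  then have "(mat 1 - C) ** L = mat 1"
    using matrix_left_right_inverse by blast
  then have "(mat 1 - C) *v (L *v c) = c"
    by (simp add: matrix_vector_mul_assoc)
  then show ?thesis
    using that[of "L *v c"] by (simp add: matrix_vector_mult_diff_rdistrib algebra_simps)
qed

lemma affine_contraction_fixpoint_nonneg:
  fixes C :: "real^'n^'n"
  assumes "0 < p" and "mat_pnorm p C < 1" and "mnonneg C" and "vnonneg c"
    and x_eq: "x = c + C *v x"
  shows "vnonneg x"
proof -
  define y where "y = (\<chi> i. max (- x $ i) 0)"
  have y_nonneg: "0 \<le> y $ i" for i
    by (simp add: y_def)
  have Cy_nonneg: "0 \<le> (C *v y) $ i" for i
    unfolding matrix_vector_mult_def using assms(3) y_nonneg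
    by (auto simp: mnonneg_def intro!: sum_nonneg)
  have "- x $ i \<le> (C *v y) $ i" for i
  proof -
    have "x $ i = c $ i + (C *v x) $ i"
      using arg_cong[OF x_eq, of "\<lambda>v. v $ i"] by simp
    then have "- x $ i \<le> (\<Sum>j\<in>UNIV. C $ i $ j * (- x $ j))"
      using assms(4) by (simp add: vnonneg_def matrix_vector_mult_def sum_negf)
    also have "\<dots> \<le> (\<Sum>j\<in>UNIV. C $ i $ j * y $ j)"
      using assms(3) by (intro sum_mono mult_left_mono) (auto simp: mnonneg_def y_def)
    finally show ?thesis by (simp add: matrix_vector_mult_def)
  qed
  then have "\<bar>y $ i\<bar> \<le> \<bar>(C *v y) $ i\<bar>" for i
    using Cy_nonneg[of i] by (simp add: y_def)
  then have "y = 0"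
    by (intro eq_0_if_vec_pnorm_le_contraction[OF assms(1,2)] vec_pnorm_mono[OF assms(1)])
  then have "y $ i = 0" for i
    by simp
  then show ?thesis
    unfolding vnonneg_def y_def by (metis max.cobounded1 neg_le_0_iff_le vec_lambda_beta)
qed

theorem corollary3p7:
  fixes A B :: "real^'n^'m" and b :: "real^'m" and p :: ereal
  assumes "rank A = CARD('m)"
    and "CARD('m) < CARD('n)"
    and "1 \<le> p"
    and "vnonneg (moore_penrose A *v b)"
    and "mnonneg (moore_penrose A ** B)"
    and "mat_pnorm p (moore_penrose A ** B) < 1"
  shows "\<exists>x :: real^'n. vnonneg x \<and> A *v x - B *v vabs x = b"
proof -
  define X where "X = moore_penrose A"
  have p: "0 < p"
    by (rule order_less_le_trans[OF _ assms(3)]) simp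
  obtain x where x_eq: "x = X *v b + (X ** B) *v x"
    using affine_contraction_has_fixpoint[OF p assms(6)] unfolding X_def by blast
  have "vnonneg x"
    using affine_contraction_fixpoint_nonneg[OF p assms(6,5,4)] x_eq unfolding X_def by blast
  then have "vabs x = x"
    unfolding vabs_def vnonneg_def by (simp add: vec_eq_iff)
  moreover have "A *v x = b + B *v x"
    using arg_cong[OF x_eq, of "(*v) A"] moore_penrose_right_inverse[OF assms(1)]
    by (simp add: X_def matrix_vector_right_distrib matrix_vector_mul_assoc matrix_mul_assoc)
  ultimately show ?thesis using \<open>vnonneg x\<close> by auto
qed

end
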